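(* For each $\mathcal{H} \in \mathbb{R}_D^{[2,2]}$ whose Hermitian flattening matrix has the form \[ \mathfrak{m}(\mathcal{H}) = \begin{pmatrix} A & C \\ C & B \end{pmatrix}, \quad A, B, C \in \mathcal{S}^2, \] there exist invertible matrices $P,Q\in \mathbb{R}^{2\times 2}$ such that $\tilde{\mathcal{H}}:=(P,Q)\times_{cong} \mathcal{H}$ has the flattening \[ \mathfrak{m}(\tilde{\mathcal{H}}) = \begin{pmatrix} sI_2 & D \\ D & s\tilde{B} \end{pmatrix} - s \begin{pmatrix} uu^T & 0 \\ 0 & 0 \end{pmatrix}, \] where $s\in \{0,1,-1\}$, $D$ is a real diagonal matrix, $u\in \mathbb{R}^{2}$ and $\tilde{B} \in \mathcal{S}^2$. In particular, $u=0$ if one of $A,B$ is positive (or negative) definite, and $s=0$ if $A=B=0$.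
   Context: For vectors $v_1,v_2\in\mathbb{C}^2$, $[v_1,v_2]_{\otimes_h} := v_1\otimes v_2\otimes \overline{v_1}\otimes\overline{v_2}$. A real Hermitian tensor $\mathcal{H}\in\mathbb{R}^{2\times2\times2\times2}$ (i.e., $\mathcal{H}_{i_1i_2j_1j_2}=\mathcal{H}_{j_1j_2i_1i_2}$, all entries real) is called $\mathbb{R}$-Hermitian decomposable if $\mathcal{H}=\sum_{i=1}^r \lambda_i [u_i^1,u_i^2]_{\otimes_h}$ with real vectors $u_i^j\in\mathbb{R}^2$ and real scalars $\lambda_i$; $\mathbb{R}_D^{[2,2]}$ denotes the subspace of such tensors. $\mathcal{S}^2$ is the set of $2\times 2$ real symmetric matrices, and $I_2$ the $2\times2$ identity. The Hermitian flattening $\mathfrak{m}$ is the linear map sending $[v_1,v_2]_{\otimes_h}$ to the Kronecker product $(v_1v_1^* )\boxtimes(v_2v_2^* )$; equivalently $\mathfrak{m}(\mathcal{H})$ is the $4\times 4$ matrix with entries $(\mathfrak{m}(\mathcal{H}))_{(i_1,i_2),(j_1,j_2)} = \mathcal{H}_{i_1 i_2 j_1 j_2}$ (rows/columns indexed lexicographically). For square matrices $Q_1,Q_2$, the multilinear congruent transformation is $(Q_1,Q_2)\times_{cong}\mathcal{H} := (Q_1,Q_2,\overline{Q_1},\overline{Q_2})\times \mathcal{H}$, where $(M_1,\dots,M_4)\times$ is the multilinear matrix-tensor product, linear and satisfying $(M_1,\dots,M_4)\times(w_1\otimes\cdots\otimes w_4) = (M_1w_1)\otimes\cdots\otimes(M_4w_4)$.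 *)

theory Defs
  imports "HOL-Analysis.Analysis" "HOL-Library.Numeral_Type"
begin

text \<open>Real 2x2x2x2 tensors; indices range over the two-element type 2 (elements 0 < 1,
  0 being the first index in the lexicographic order).\<close>
type_synonym tensor4 = "2 \<Rightarrow> 2 \<Rightarrow> 2 \<Rightarrow> 2 \<Rightarrow> real"

definition real_hermitian :: "tensor4 \<Rightarrow> bool" where
  "real_hermitian H \<longleftrightarrow> (\<forall>i1 i2 j1 j2. H i1 i2 j1 j2 = H j1 j2 i1 i2)"

text \<open>[v1,v2]_h = v1 (x) v2 (x) conj v1 (x) conj v2, for real vectors.\<close>
definition herm_rank1 :: "real^2 \<Rightarrow> real^2 \<Rightarrow> tensor4" where
  "herm_rank1 v1 v2 = (\<lambda>i1 i2 j1 j2. v1$i1 * v2$i2 * v1$j1 * v2$j2)"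

definition R_herm_decomposable :: "tensor4 \<Rightarrow> bool" where
  "R_herm_decomposable H \<longleftrightarrow> real_hermitian H \<and>
     (\<exists>(r::nat) (lam::nat \<Rightarrow> real) (u1::nat \<Rightarrow> real^2) (u2::nat \<Rightarrow> real^2).
        H = (\<lambda>i1 i2 j1 j2. \<Sum>i<r. lam i * herm_rank1 (u1 i) (u2 i) i1 i2 j1 j2))"

definition herm_flat :: "tensor4 \<Rightarrow> real^(2\<times>2)^(2\<times>2)" where
  "herm_flat H = (\<chi> p q. H (fst p) (snd p) (fst q) (snd q))"

definition block2 :: "real^2^2 \<Rightarrow> real^2^2 \<Rightarrow> real^2^2 \<Rightarrow> real^2^2 \<Rightarrow> real^(2\<times>2)^(2\<times>2)" where
  "block2 M11 M12 M21 M22 = (\<chi> p q.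
     (if fst p = 0 then (if fst q = 0 then M11 else M12)
      else (if fst q = 0 then M21 else M22)) $ snd p $ snd q)"

text \<open>Multilinear congruent transformation (P,Q) x_cong H = (P,Q,conj P,conj Q) x H, P,Q real.\<close>
definition cong_transf :: "real^2^2 \<Rightarrow> real^2^2 \<Rightarrow> tensor4 \<Rightarrow> tensor4" where
  "cong_transf P Q H = (\<lambda>a b c d. \<Sum>i\<in>UNIV. \<Sum>j\<in>UNIV. \<Sum>k\<in>UNIV. \<Sum>l\<in>UNIV.
      P$a$i * Q$b$j * P$c$k * Q$d$l * H i j k l)"

definition symmetric_mat :: "real^'n^'n \<Rightarrow> bool" where
  "symmetric_mat A \<longleftrightarrow> transpose A = A"

definition diagonal_mat :: "real^'n^'n \<Rightarrow> bool" where
  "diagonal_mat A \<longleftrightarrow> (\<forall>i j. i \<noteq> j \<longrightarrow> A$i$j = 0)"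

definition pos_def :: "real^'n^'n \<Rightarrow> bool" where
  "pos_def A \<longleftrightarrow> symmetric_mat A \<and> (\<forall>x. x \<noteq> 0 \<longrightarrow> x \<bullet> (A *v x) > 0)"

definition neg_def :: "real^'n^'n \<Rightarrow> bool" where
  "neg_def A \<longleftrightarrow> symmetric_mat A \<and> (\<forall>x. x \<noteq> 0 \<longrightarrow> x \<bullet> (A *v x) < 0)"

definition outer :: "real^'n \<Rightarrow> real^'n^'n" where
  "outer u = (\<chi> i j. u$i * u$j)"

end

theory Submission
  imports Defs
begin

(*
  For P = I or P the coordinate swap, the flattening of (P,Q) x_cong H again has blocks
  Q M Q^T built from the blocks M of the flattening of H (with A and B exchanged by the
  swap).  So it suffices to find, for a nonzero symmetric 2x2 block A, a congruence taking
  A to s (I - u u^T) and simultaneously diagonalizing C.  If A is definite, first make it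
  +-I and then diagonalize C by an orthogonal matrix, which fixes +-I.  Otherwise
  diagonalize C orthogonally first and continue only with diagonal scalings (and possibly
  the swap), which keep C diagonal: a suitable scaling D makes I - s D A D positive
  semidefinite and singular, hence of the form u u^T.  If A = B = 0, diagonalizing C
  alone gives s = 0.
*)

definition mat2 :: "real \<Rightarrow> real \<Rightarrow> real \<Rightarrow> real \<Rightarrow> real^2^2" where
  "mat2 a b c d = (\<chi> i j. if i = 1 then (if j = 1 then a else b) else (if j = 1 then c else d))"

lemma mat2_nth [simp]:
  "mat2 a b c d $ 1 $ 1 = a" "mat2 a b c d $ 1 $ 2 = b"
  "mat2 a b c d $ 2 $ 1 = c" "mat2 a b c d $ 2 $ 2 = d"
  by (simp_all add: mat2_def)

lemma mat2_eta: "M = mat2 (M$1$1) (M$1$2) (M$2$1) (M$2$2)"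
  by (simp add: vec_eq_iff forall_2)

lemma mat2_eq_iff: "mat2 a b c d = mat2 a' b' c' d' \<longleftrightarrow> a = a' \<and> b = b' \<and> c = c' \<and> d = d'"
  by (auto simp add: vec_eq_iff forall_2)

lemma mat2_mult: "mat2 a b c d ** mat2 e f g h = mat2 (a*e + b*g) (a*f + b*h) (c*e + d*g) (c*f + d*h)"
  by (simp add: vec_eq_iff forall_2 matrix_matrix_mult_def sum_2)

lemma transpose_mat2: "transpose (mat2 a b c d) = mat2 a c b d"
  by (simp add: vec_eq_iff forall_2 transpose_def)

lemma mat_eq_mat2: "mat x = mat2 x 0 0 x"
  by (simp add: vec_eq_iff forall_2 mat_def)

lemma zero_eq_mat2: "0 = mat2 0 0 0 0"
  by (simp add: vec_eq_iff forall_2)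

lemma scaleR_mat2: "r *\<^sub>R mat2 a b c d = mat2 (r*a) (r*b) (r*c) (r*d)"
  by (simp add: vec_eq_iff forall_2)

lemma diff_mat2: "mat2 a b c d - mat2 a' b' c' d' = mat2 (a-a') (b-b') (c-c') (d-d')"
  by (simp add: vec_eq_iff forall_2)

lemma det_mat2: "det (mat2 a b c d) = a*d - b*c"
  by (simp add: det_2)

lemma outer_vector2: "outer (vector [x, y]) = mat2 (x*x) (x*y) (y*x) (y*y)"
  by (simp add: vec_eq_iff forall_2 outer_def)

lemma outer_zero: "outer 0 = 0"
  by (simp add: outer_def vec_eq_iff)

lemma symmetric_mat2_iff: "symmetric_mat (mat2 a b c d) \<longleftrightarrow> b = c"
  by (auto simp add: symmetric_mat_def transpose_mat2 mat2_eq_iff)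

lemma diagonal_mat2_iff: "diagonal_mat (mat2 a b c d) \<longleftrightarrow> b = 0 \<and> c = 0"
proof -
  have "(\<forall>i j::2. i \<noteq> j \<longrightarrow> P i j) \<longleftrightarrow> P 1 2 \<and> P 2 1" for P
    by (metis exhaust_2 one_neq_zero)
  then show ?thesis unfolding diagonal_mat_def by simp
qed

lemma symmetric_matE:
  assumes "symmetric_mat S" obtains a b c where "S = mat2 a b b c"
  using assms mat2_eta[of S] symmetric_mat2_iff by metis

lemma diagonal_matE:
  assumes "diagonal_mat D" obtains e f where "D = mat2 e 0 0 f"
  using assms mat2_eta[of D] diagonal_mat2_iff by metis

lemma quadratic_form_mat2:
  "vector [x, y] \<bullet> (mat2 a b c d *v vector [x, y]) = x*(a*x + b*y) + y*(c*x + d*y)"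
  by (simp add: inner_vec_def sum_2 matrix_vector_mult_def)

lemma vector2_eq_0_iff: "vector [x, y] = (0::real^2) \<longleftrightarrow> x = 0 \<and> y = 0"
  by (auto simp: vec_eq_iff forall_2)

definition mat_congr :: "real^'n^'n \<Rightarrow> real^'n^'n \<Rightarrow> real^'n^'n" where
  "mat_congr Q M = Q ** M ** transpose Q"

lemma mat_congr_mat2:
  "mat_congr (mat2 p q r t) (mat2 a b c d) =
     mat2 ((p*a + q*c)*p + (p*b + q*d)*q) ((p*a + q*c)*r + (p*b + q*d)*t)
          ((r*a + t*c)*p + (r*b + t*d)*q) ((r*a + t*c)*r + (r*b + t*d)*t)"
  by (simp add: mat_congr_def mat2_mult transpose_mat2)

lemma mat_congr_mult: "mat_congr (Q ** R) M = mat_congr Q (mat_congr R M)"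
  by (simp add: mat_congr_def matrix_transpose_mul matrix_mul_assoc)

lemma mat_congr_scaleR: "mat_congr Q (r *\<^sub>R M) = r *\<^sub>R mat_congr Q M"
  by (simp add: mat_congr_def matrix_scalar_ac scalar_matrix_assoc)

lemma mat_congr_orthogonal_scalar:
  assumes "orthogonal_matrix U" shows "mat_congr U (r *\<^sub>R mat 1) = r *\<^sub>R mat 1"
  using assms by (simp add: mat_congr_def orthogonal_matrix_def matrix_scalar_ac
      flip: scalar_matrix_assoc)

lemma symmetric_mat_congr: "symmetric_mat M \<Longrightarrow> symmetric_mat (mat_congr Q M)"
  by (simp add: symmetric_mat_def mat_congr_def matrix_transpose_mul matrix_mul_assoc)

lemma mat_congr_eq_0_iff:
  assumes "invertible Q" shows "mat_congr Q M = 0 \<longleftrightarrow> M = 0"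
proof
  obtain Q' where Q': "Q' ** Q = mat 1" using assms invertible_def by blast
  then have "transpose Q ** transpose Q' = mat 1"
    by (metis matrix_transpose_mul transpose_mat)
  moreover have "mat_congr Q' (mat_congr Q M) = (Q' ** Q) ** M ** (transpose Q ** transpose Q')"
    by (simp add: mat_congr_def matrix_transpose_mul matrix_mul_assoc)
  ultimately have "M = mat_congr Q' (mat_congr Q M)"
    using Q' by simp
  then show "mat_congr Q M = 0 \<Longrightarrow> M = 0" by (simp add: mat_congr_def)
qed (simp add: mat_congr_def)

lemma orthogonal_matrix_imp_invertible: "orthogonal_matrix U \<Longrightarrow> invertible U"
  by (auto simp: invertible_def orthogonal_matrix_def)

lemma orthogonal_diagonalization_mat2:
  fixes S :: "real^2^2"
  assumes "symmetric_mat S"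
  obtains U where "orthogonal_matrix U" "diagonal_mat (mat_congr U S)"
proof -
  obtain a b c where S: "S = mat2 a b b c" using assms symmetric_matE by blast
  show ?thesis
  proof (cases "b = 0")
    case True
    then show ?thesis
      by (intro that[of "mat 1"] orthogonal_matrix_id)
        (simp add: S mat_eq_mat2 mat_congr_mat2 diagonal_mat2_iff)
  next
    case False
    \<comment> \<open>(b, l) is an eigenvector of S, since l^2 + (a - c) l = b^2.\<close>
    define r where "r = sqrt (((a - c)/2)^2 + b^2)"
    define l where "l = (c - a)/2 + r"
    have "r^2 = ((a - c)/2)^2 + b^2" unfolding r_def by simp
    then have l: "l * (l + a - c) = b^2"
      unfolding l_def by (simp add: field_simps power2_eq_square)
    define n where "n = sqrt (b^2 + l^2)"
    have "n > 0" unfolding n_def using False by (simp add: add_pos_nonneg)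
    have n: "n * n = b^2 + l^2" unfolding n_def by (simp flip: power2_eq_square)
    define U where "U = mat2 (b/n) (l/n) (-l/n) (b/n)"
    have "(b/n)*(b/n) + (l/n)*(l/n) = 1"
      using n \<open>n > 0\<close> False by (simp add: divide_simps power2_eq_square)
    then have "U ** transpose U = mat 1"
      by (simp add: U_def mat_eq_mat2 mat2_mult transpose_mat2 mat2_eq_iff algebra_simps)
    moreover have "diagonal_mat (mat_congr U S)"
      using l \<open>n > 0\<close> unfolding S U_def mat_congr_mat2 diagonal_mat2_iff
      by (simp add: field_simps power2_eq_square) algebra
    ultimately show ?thesis
      by (intro that) (simp_all add: orthogonal_matrix matrix_left_right_inverse)
  qed
qed

definition definite_mat :: "real^'n^'n \<Rightarrow> bool" where
  "definite_mat M \<longleftrightarrow> pos_def M \<or> neg_def M"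

lemma neg_def_iff_pos_def_uminus: "neg_def M \<longleftrightarrow> pos_def (- M)"
proof -
  have "symmetric_mat (- M) \<longleftrightarrow> symmetric_mat M"
    by (auto simp: symmetric_mat_def transpose_def vec_eq_iff)
  moreover have "x \<bullet> (- M *v x) = - (x \<bullet> (M *v x))" for x
    by (simp add: matrix_vector_mult_def inner_vec_def sum_negf flip: sum.distrib)
  ultimately show ?thesis by (auto simp: neg_def_def pos_def_def)
qed

lemma definite_mat_nonzero: "definite_mat M \<Longrightarrow> M \<noteq> 0"
  by (auto simp: definite_mat_def pos_def_def neg_def_def dest: spec[of _ "axis undefined 1"])

lemma pos_def_mat2:
  assumes "pos_def (mat2 a b b c)" shows "a > 0" "a*c - b*b > 0"
proof -
  have q: "x*(a*x + b*y) + y*(b*x + c*y) > 0" if "x \<noteq> 0 \<or> y \<noteq> 0" for x y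
    using assms that unfolding pos_def_def by (metis quadratic_form_mat2 vector2_eq_0_iff)
  show "a > 0" using q[of 1 0] by simp
  with q[of b "-a"] have "a*(a*c - b*b) > 0" by (simp add: algebra_simps)
  with \<open>a > 0\<close> show "a*c - b*b > 0" by (simp add: zero_less_mult_iff)
qed

lemma pos_def_congruent_identity:
  fixes A :: "real^2^2"
  assumes "pos_def A"
  obtains Q where "invertible Q" "mat_congr Q A = mat 1"
proof -
  obtain a b c where A: "A = mat2 a b b c"
    using assms symmetric_matE unfolding pos_def_def by blast
  with assms have "a > 0" "a*c - b*b > 0" using pos_def_mat2 by auto
  define d where "d = (a*c - b*b)/a"
  have "d > 0" unfolding d_def using \<open>a > 0\<close> \<open>a*c - b*b > 0\<close> by simp
  have c: "c = d + b*b/a" unfolding d_def using \<open>a > 0\<close> by (simp add: field_simps)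
  \<comment> \<open>Q is the inverse of the Cholesky factor [[sqrt a, 0], [b / sqrt a, sqrt d]] of A.\<close>
  let ?ra = "sqrt a" and ?rd = "sqrt d"
  show ?thesis
  proof (rule that[of "mat2 (1/?ra) 0 (-b/(a*?rd)) (1/?rd)"])
    show "invertible (mat2 (1/?ra) 0 (-b/(a*?rd)) (1/?rd))"
      using \<open>a > 0\<close> \<open>d > 0\<close> by (simp add: invertible_det_nz det_mat2)
    show "mat_congr (mat2 (1/?ra) 0 (-b/(a*?rd)) (1/?rd)) A = mat 1"
      unfolding A mat_congr_mat2 mat_eq_mat2 mat2_eq_iff using \<open>a > 0\<close> \<open>d > 0\<close> c
      by (simp add: field_simps)
  qed
qed

lemma definite_simultaneous_normal_form:
  fixes A C :: "real^2^2"
  assumes "definite_mat A" "symmetric_mat C"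
  obtains Q s where "invertible Q" "s \<in> {1, -1}" "mat_congr Q A = s *\<^sub>R mat 1"
    "diagonal_mat (mat_congr Q C)"
proof -
  obtain Q1 s where Q1: "invertible Q1" "s \<in> {1, -1}" "mat_congr Q1 A = s *\<^sub>R mat 1"
  proof (cases "pos_def A")
    case True
    then show ?thesis using that[of _ 1] pos_def_congruent_identity by (metis insertI1 scaleR_one)
  next
    case False
    with assms(1) have "pos_def (- A)"
      by (simp add: definite_mat_def neg_def_iff_pos_def_uminus)
    then obtain Q1 where "invertible Q1" "mat_congr Q1 (- A) = mat 1"
      using pos_def_congruent_identity by blast
    moreover have "mat_congr Q1 A = - mat_congr Q1 (- A)"
      using mat_congr_scaleR[of Q1 "-1" A] by simp
    ultimately show ?thesis using that[of Q1 "-1"] by simp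
  qed
  obtain U where U: "orthogonal_matrix U" "diagonal_mat (mat_congr U (mat_congr Q1 C))"
    using orthogonal_diagonalization_mat2 symmetric_mat_congr assms(2) by blast
  show ?thesis
  proof (rule that[of "U ** Q1" s])
    show "invertible (U ** Q1)"
      using orthogonal_matrix_imp_invertible[OF U(1)] Q1(1) invertible_mult by blast
    show "mat_congr (U ** Q1) A = s *\<^sub>R mat 1"
      using U(1) Q1(3) by (simp add: mat_congr_mult mat_congr_orthogonal_scalar)
    show "diagonal_mat (mat_congr (U ** Q1) C)"
      using U(2) by (simp add: mat_congr_mult)
  qed fact
qed

lemma psd_singular_mat2_eq_outer:
  assumes "p \<ge> 0" "r \<ge> 0" "p * r = q * q"
  obtains u where "mat2 p q q r = outer u"
proof (cases "p = 0")
  case True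
  with assms have "q = 0" by simp
  with True \<open>r \<ge> 0\<close> show ?thesis
    by (intro that[of "vector [0, sqrt r]"]) (simp add: outer_vector2 flip: power2_eq_square)
next
  case False
  with assms have "q * q / p = r" by (simp add: field_simps)
  with False \<open>p \<ge> 0\<close> show ?thesis
    by (intro that[of "vector [sqrt p, q / sqrt p]"])
      (simp add: outer_vector2 mat2_eq_iff field_simps flip: power2_eq_square)
qed

lemma diagonal_scaling_mat2:
  assumes "a \<noteq> 0 \<or> b \<noteq> 0"
  obtains d1 d2 s u where "d1 \<noteq> 0" "d2 \<noteq> 0" "s \<in> {1, -1}"
    "mat_congr (mat2 d1 0 0 d2) (mat2 a b b c) = s *\<^sub>R (mat 1 - outer u)"
proof -
  \<comment> \<open>x = d1^2 and y = d2^2: any y with 1 - s c y > 0 works, and x is then determined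
    by det (I - s D A D) = 0.\<close>
  define s where "s = (if a \<ge> 0 then 1 else -1 :: real)"
  have s: "s \<in> {1, -1}" "s * s = 1" "s * a \<ge> 0" "b = 0 \<Longrightarrow> s * a > 0"
    using assms unfolding s_def by auto
  define y where "y = 1 / (1 + \<bar>c\<bar>)"
  have "y > 0" "\<bar>c * y\<bar> < 1"
    unfolding y_def by (simp_all add: abs_mult field_simps)
  define k where "k = 1 - s * c * y"
  have "k > 0"
    unfolding k_def using \<open>\<bar>c * y\<bar> < 1\<close> s(1) by (auto simp: abs_less_iff)
  define den where "den = s * a * k + b * b * y"
  have "s * a * k \<ge> 0" "b * b * y \<ge> 0" "s * a * k > 0 \<or> b * b * y > 0"
    using s(3,4) \<open>k > 0\<close> \<open>y > 0\<close> by (auto simp: zero_less_mult_iff)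
  then have "den > 0" unfolding den_def by linarith
  define x where "x = k / den"
  have "x > 0" unfolding x_def using \<open>k > 0\<close> \<open>den > 0\<close> by simp
  define d1 d2 where "d1 = sqrt x" and "d2 = sqrt y"
  have d: "d1 * d1 = x" "d2 * d2 = y"
    unfolding d1_def d2_def using \<open>x > 0\<close> \<open>y > 0\<close> by simp_all
  define p q where "p = 1 - s * a * x" and "q = - s * b * d1 * d2"
  have p: "p = b * b * y / den"
    unfolding p_def x_def using \<open>den > 0\<close> by (simp add: field_simps den_def)
  have "p * k = q * q"
    unfolding p q_def using d s(2) \<open>den > 0\<close> by (simp add: x_def field_simps)
  moreover have "p \<ge> 0" unfolding p using \<open>y > 0\<close> \<open>den > 0\<close> by simp
  ultimately obtain u where u: "mat2 p q q k = outer u"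
    using psd_singular_mat2_eq_outer \<open>k > 0\<close> by (metis less_le)
  show ?thesis
  proof (rule that[of d1 d2 s u])
    show "d1 \<noteq> 0" "d2 \<noteq> 0" unfolding d1_def d2_def using \<open>x > 0\<close> \<open>y > 0\<close> by simp_all
    have "s *\<^sub>R (mat 1 - outer u) = mat2 (s * (1 - p)) (- s * q) (- s * q) (s * (1 - k))"
      by (simp add: u [symmetric] mat_eq_mat2 diff_mat2 scaleR_mat2)
    also have "\<dots> = mat2 (a * x) (b * d1 * d2) (b * d1 * d2) (c * y)"
      unfolding p_def q_def k_def mat2_eq_iff using s(2) by (simp add: algebra_simps)
    also have "\<dots> = mat_congr (mat2 d1 0 0 d2) (mat2 a b b c)"
      unfolding mat_congr_mat2 mat2_eq_iff using d by (simp add: algebra_simps)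
    finally show "mat_congr (mat2 d1 0 0 d2) (mat2 a b b c) = s *\<^sub>R (mat 1 - outer u)" ..
  qed (use s in auto)
qed

lemma simultaneous_normal_form:
  fixes A C :: "real^2^2"
  assumes "symmetric_mat A" "A \<noteq> 0" "symmetric_mat C"
  obtains Q s u where "invertible Q" "s \<in> {1, -1}" "mat_congr Q A = s *\<^sub>R (mat 1 - outer u)"
    "diagonal_mat (mat_congr Q C)"
proof -
  obtain U where U: "orthogonal_matrix U" "diagonal_mat (mat_congr U C)"
    using orthogonal_diagonalization_mat2 assms(3) by blast
  have "invertible U" using U(1) orthogonal_matrix_imp_invertible by blast
  obtain a b c where A': "mat_congr U A = mat2 a b b c"
    using symmetric_mat_congr assms(1) symmetric_matE by metis
  obtain e f where C': "mat_congr U C = mat2 e 0 0 f"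
    using U(2) diagonal_matE by blast
  have "a \<noteq> 0 \<or> b \<noteq> 0 \<or> c \<noteq> 0"
    using A' assms(2) mat_congr_eq_0_iff[OF \<open>invertible U\<close>] by (auto simp: zero_eq_mat2)
  then obtain V a' b' c' e' f' where V: "invertible V" "a' \<noteq> 0 \<or> b' \<noteq> 0"
    "mat_congr V (mat2 a b b c) = mat2 a' b' b' c'" "mat_congr V (mat2 e 0 0 f) = mat2 e' 0 0 f'"
  proof (cases "a \<noteq> 0 \<or> b \<noteq> 0")
    case True
    then show ?thesis
      by (intro that[of "mat 1"] orthogonal_matrix_imp_invertible orthogonal_matrix_id)
        (simp_all add: mat_eq_mat2 mat_congr_mat2)
  next
    case False
    with \<open>a \<noteq> 0 \<or> b \<noteq> 0 \<or> c \<noteq> 0\<close> show ?thesis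
      by (intro that[of "mat2 0 1 1 0" c 0 0 f e]) (simp_all add: invertible_det_nz det_mat2 mat_congr_mat2)
  qed
  obtain d1 d2 s u where D: "d1 \<noteq> 0" "d2 \<noteq> 0" "s \<in> {1, -1}"
    "mat_congr (mat2 d1 0 0 d2) (mat2 a' b' b' c') = s *\<^sub>R (mat 1 - outer u)"
    using diagonal_scaling_mat2 V(2) by blast
  show ?thesis
  proof (rule that[of "mat2 d1 0 0 d2 ** V ** U" s u])
    show "invertible (mat2 d1 0 0 d2 ** V ** U)"
      using D(1,2) V(1) \<open>invertible U\<close> by (intro invertible_mult) (simp_all add: invertible_det_nz det_mat2)
    show "mat_congr (mat2 d1 0 0 d2 ** V ** U) A = s *\<^sub>R (mat 1 - outer u)"
      by (simp add: mat_congr_mult A' V(3) D(4))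
    show "diagonal_mat (mat_congr (mat2 d1 0 0 d2 ** V ** U) C)"
      by (simp add: mat_congr_mult C' V(4) mat_congr_mat2 diagonal_mat2_iff)
  qed fact
qed

lemma block_normal_form:
  fixes A B C :: "real^2^2"
  assumes "symmetric_mat A" "symmetric_mat B" "symmetric_mat C" "A \<noteq> 0"
  obtains Q s D u Bt where "invertible Q" "s \<in> {1, -1}" "diagonal_mat D" "symmetric_mat Bt"
    "block2 (mat_congr Q A) (mat_congr Q C) (mat_congr Q C) (mat_congr Q B)
       = block2 (s *\<^sub>R mat 1) D D (s *\<^sub>R Bt) - s *\<^sub>R block2 (outer u) 0 0 0"
    "definite_mat A \<Longrightarrow> u = 0"
proof -
  obtain Q s u where Q: "invertible Q" "s \<in> {1, -1}" "mat_congr Q A = s *\<^sub>R (mat 1 - outer u)"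
    "diagonal_mat (mat_congr Q C)" "definite_mat A \<Longrightarrow> u = 0"
  proof (cases "definite_mat A")
    case True
    with assms(3) show ?thesis
      using that[of _ _ 0] by (metis definite_simultaneous_normal_form diff_zero outer_zero)
  next
    case False
    with assms(1,3,4) show ?thesis
      using that by (metis simultaneous_normal_form)
  qed
  have "s * s = 1" using Q(2) by auto
  then have "block2 (mat_congr Q A) (mat_congr Q C) (mat_congr Q C) (mat_congr Q B)
      = block2 (s *\<^sub>R mat 1) (mat_congr Q C) (mat_congr Q C) (s *\<^sub>R (s *\<^sub>R mat_congr Q B))
        - s *\<^sub>R block2 (outer u) 0 0 0"
    by (simp add: Q(3) vec_eq_iff block2_def algebra_simps)
  with Q symmetric_mat_congr[OF assms(2), of Q] show ?thesis
    by (intro that[of Q s "mat_congr Q C" "s *\<^sub>R mat_congr Q B" u])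
      (auto simp: symmetric_mat_def transpose_scalar)
qed

lemma herm_flat_cong_transf_blocks:
  assumes "herm_flat H = block2 M11 M12 M21 M22"
  shows "herm_flat (cong_transf (mat 1) Q H)
           = block2 (mat_congr Q M11) (mat_congr Q M12) (mat_congr Q M21) (mat_congr Q M22)"
    and "herm_flat (cong_transf (mat2 0 1 1 0) Q H)
           = block2 (mat_congr Q M22) (mat_congr Q M21) (mat_congr Q M12) (mat_congr Q M11)"
proof -
  have H: "H i1 i2 j1 j2 = block2 M11 M12 M21 M22 $ (i1, i2) $ (j1, j2)" for i1 i2 j1 j2
    using arg_cong[OF assms, of "\<lambda>M. M $ (i1, i2) $ (j1, j2)"] by (simp add: herm_flat_def)
  have swap: "mat2 0 1 1 0 $ i $ j = (if i = j then 0 else 1)" for i j :: 2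
    using exhaust_2[of i] exhaust_2[of j] by auto
  show "herm_flat (cong_transf (mat 1) Q H)
          = block2 (mat_congr Q M11) (mat_congr Q M12) (mat_congr Q M21) (mat_congr Q M22)"
    unfolding vec_eq_iff
    by (auto simp: forall_2 herm_flat_def cong_transf_def block2_def H sum_2 mat_def
        mat_congr_def matrix_matrix_mult_def transpose_def algebra_simps)
  show "herm_flat (cong_transf (mat2 0 1 1 0) Q H)
          = block2 (mat_congr Q M22) (mat_congr Q M21) (mat_congr Q M12) (mat_congr Q M11)"
    unfolding vec_eq_iff
    by (auto simp: forall_2 herm_flat_def cong_transf_def block2_def H sum_2 swap
        mat_congr_def matrix_matrix_mult_def transpose_def algebra_simps)
qed

theorem proposition4p2:
  fixes H :: tensor4 and A B C :: "real^2^2"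
  assumes "R_herm_decomposable H"
    and "herm_flat H = block2 A C C B"
    and "symmetric_mat A" and "symmetric_mat B" and "symmetric_mat C"
  shows "\<exists>(P::real^2^2) (Q::real^2^2) (s::real) (D::real^2^2) (u::real^2) (Bt::real^2^2).
           invertible P \<and> invertible Q \<and> s \<in> {0, 1, -1} \<and> diagonal_mat D \<and> symmetric_mat Bt \<and>
           herm_flat (cong_transf P Q H)
             = block2 (s *\<^sub>R mat 1) D D (s *\<^sub>R Bt) - s *\<^sub>R block2 (outer u) 0 0 0 \<and>
           ((pos_def A \<or> neg_def A \<or> pos_def B \<or> neg_def B) \<longrightarrow> u = 0) \<and>
           (A = 0 \<and> B = 0 \<longrightarrow> s = 0)"
proof (cases "A = 0 \<and> B = 0")
  case True
  obtain U where U: "orthogonal_matrix U" "diagonal_mat (mat_congr U C)"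
    using orthogonal_diagonalization_mat2 assms(5) by blast
  have "herm_flat (cong_transf (mat 1) U H) = block2 0 (mat_congr U C) (mat_congr U C) 0"
    using herm_flat_cong_transf_blocks(1)[OF assms(2)] True by (simp add: mat_congr_def)
  with U show ?thesis
    by (intro exI[of _ "mat 1"] exI[of _ U] exI[of _ 0] exI[of _ "mat_congr U C"] exI[of _ 0])
      (simp add: orthogonal_matrix_imp_invertible orthogonal_matrix_id symmetric_mat_def)
next
  case False
  have swap: "invertible (mat2 0 1 1 0)" by (simp add: invertible_det_nz det_mat2)
  obtain P X Y where P: "invertible P" "symmetric_mat X" "symmetric_mat Y" "X \<noteq> 0"
    "\<And>Q. herm_flat (cong_transf P Q H)
       = block2 (mat_congr Q X) (mat_congr Q C) (mat_congr Q C) (mat_congr Q Y)"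
    "definite_mat A \<or> definite_mat B \<Longrightarrow> definite_mat X"
  proof (cases "A \<noteq> 0 \<and> (definite_mat A \<or> \<not> definite_mat B)")
    case True
    with assms(3,4) show ?thesis
      using that[OF orthogonal_matrix_imp_invertible[OF orthogonal_matrix_id]]
        herm_flat_cong_transf_blocks(1)[OF assms(2)] by blast
  next
    case False
    with \<open>\<not> (A = 0 \<and> B = 0)\<close> assms(3,4) show ?thesis
      using that[OF swap] herm_flat_cong_transf_blocks(2)[OF assms(2)]
      by (metis definite_mat_nonzero)
  qed
  obtain Q s D u Bt where "invertible Q" "s \<in> {1, -1}" "diagonal_mat D" "symmetric_mat Bt"
    "herm_flat (cong_transf P Q H)
       = block2 (s *\<^sub>R mat 1) D D (s *\<^sub>R Bt) - s *\<^sub>R block2 (outer u) 0 0 0"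
    "definite_mat X \<Longrightarrow> u = 0"
    using block_normal_form[OF P(2,3) assms(5) P(4)] P(5) by metis
  with P(1,6) False show ?thesis
    unfolding definite_mat_def by blast
qed

end
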